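(* Let $G\in\mathrm{C}^2(\mathbb{R})$ be coercive and $p_1<p_2$ with $G'(p_1)<0<G'(p_2)$, and let $L=\frac{G'(p_2)}{G'(p_2)-G'(p_1)}\in(0,1)$. For any $\ell\in(0,\min\{L,1-L\})$ there is $f\in\mathcal{C}(L,\ell)$ such that $\int_0^1 G'(f(x))\,dx=0$.
   Context: $G$ coercive means $G(p)\to\infty$ as $p\to\pm\infty$. $\mathrm{C}^{1,1}(\mathbb{R})$ is the set of $f\in\mathrm{C}^1(\mathbb{R})$ with $f'$ Lipschitz. $\mathcal{C}(L,\ell)$ is the set of $1$-periodic $f\in\mathrm{C}^{1,1}(\mathbb{R})$ with $p_1\le f(x)\le p_2$ for all $x$, $f(x)=p_1$ for $x\in[0,L-\ell]$, and $f(x)=p_2$ for $x\in[L,1-\ell]$. *)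

theory Defs
  imports "HOL-Analysis.Analysis"
begin

definition C2_real :: "(real \<Rightarrow> real) \<Rightarrow> bool" where
  "C2_real G \<longleftrightarrow> (\<forall>x. G differentiable at x) \<and> (\<forall>x. deriv G differentiable at x)
      \<and> continuous_on UNIV (deriv (deriv G))"

definition coercive :: "(real \<Rightarrow> real) \<Rightarrow> bool" where
  "coercive G \<longleftrightarrow> filterlim G at_top at_top \<and> filterlim G at_top at_bot"

definition C11_real :: "(real \<Rightarrow> real) \<Rightarrow> bool" where
  "C11_real f \<longleftrightarrow> (\<forall>x. f differentiable at x) \<and> (\<exists>K. lipschitz_on K UNIV (deriv f))"

definition classC :: "real \<Rightarrow> real \<Rightarrow> real \<Rightarrow> real \<Rightarrow> (real \<Rightarrow> real) set" where
  "classC p1 p2 L l = {f. (\<forall>x. f (x + 1) = f x) \<and> C11_real f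
      \<and> (\<forall>x. p1 \<le> f x \<and> f x \<le> p2)
      \<and> (\<forall>x\<in>{0..L - l}. f x = p1) \<and> (\<forall>x\<in>{L..1 - l}. f x = p2)}"

end

(*
  f is the 1-periodic extension of a plateau: it equals p1, rises to p2 on [alpha, alpha + w]
  through a rescaled C^{1,1} cubic smoothstep, stays at p2 until beta and falls back to p1 on
  [beta, beta + w]. With g = G', D = g p2 - g p1 and L D = g p2, the mean of g o f over a period is
    g p1 + (beta - alpha) D + w E,
  where E depends only on the transition profile and not on alpha, beta, w. Choosing
  beta - alpha = 1 - L - w E / D therefore makes the mean vanish, and for w small this shift fits
  into the slack that l leaves around the points L and 1.
*)
theory Submission
  imports Defs
begin

lemma has_real_derivative_at_split:
  fixes f :: "real \<Rightarrow> real"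
  assumes "(f has_real_derivative D) (at x within {..x})"
    and "(f has_real_derivative D) (at x within {x..})"
  shows "(f has_real_derivative D) (at x)"
proof -
  have "((\<lambda>y. (f y - f x) / (y - x)) \<longlongrightarrow> D) (at x within {..x} \<union> {x..})"
    using assms unfolding has_field_derivative_iff Lim_within_Un by simp
  moreover have "{..x} \<union> {x..} = UNIV" by auto
  ultimately show ?thesis
    unfolding has_field_derivative_iff by simp
qed

lemma has_real_derivative_if_le:
  fixes f g :: "real \<Rightarrow> real"
  assumes f: "\<And>y. (f has_real_derivative f' y) (at y)"
    and g: "\<And>y. (g has_real_derivative g' y) (at y)"
    and "f c = g c" and "f' c = g' c"
  shows "((\<lambda>y. if y \<le> c then f y else g y) has_real_derivative
           (if x \<le> c then f' x else g' x)) (at x)"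
proof (cases x c rule: linorder_cases)
  case less
  then show ?thesis
    using has_field_derivative_transform_within_open[OF f, where S="{..<c}"] by auto
next
  case greater
  then show ?thesis
    using has_field_derivative_transform_within_open[OF g, where S="{c<..}"] by auto
next
  case equal
  have f'_eq: "(if x \<le> c then f' x else g' x) = f' x" and g'_eq: "g' x = f' x"
    using equal assms(4) by auto
  show ?thesis
    unfolding f'_eq
  proof (rule has_real_derivative_at_split)
    show "((\<lambda>y. if y \<le> c then f y else g y) has_real_derivative f' x) (at x within {..x})"
      by (rule has_field_derivative_transform_within[OF has_field_derivative_at_within[OF f], where d=1])
        (use equal in auto)
    show "((\<lambda>y. if y \<le> c then f y else g y) has_real_derivative f' x) (at x within {x..})"
      unfolding g'_eq[symmetric]
      by (rule has_field_derivative_transform_within[OF has_field_derivative_at_within[OF g], where d=1])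
        (use equal assms(3) in auto)
  qed
qed

lemma has_real_derivative_compose_clamp:
  fixes P P' :: "real \<Rightarrow> real"
  assumes "a \<le> b" and P: "\<And>v. (P has_real_derivative P' v) (at v)"
    and "P' a = 0" and "P' b = 0"
  shows "((\<lambda>u. P (max a (min b u))) has_real_derivative P' (max a (min b u))) (at u)"
proof -
  have clamp: "max a (min b v) = (if v \<le> a then a else if v \<le> b then v else b)" for v
    using \<open>a \<le> b\<close> by auto
  have upper: "((\<lambda>u. if u \<le> b then P u else P b) has_real_derivative
      (if v \<le> b then P' v else 0)) (at v)" for v
    using assms by (intro has_real_derivative_if_le[OF P]) auto
  have "((\<lambda>u. if u \<le> a then P a else if u \<le> b then P u else P b) has_real_derivative
      (if u \<le> a then 0 else if u \<le> b then P' u else 0)) (at u)"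
    using assms by (intro has_real_derivative_if_le[OF _ upper]) auto
  moreover have "(\<lambda>u. P (max a (min b u))) = (\<lambda>u. if u \<le> a then P a else if u \<le> b then P u else P b)"
    by (intro ext) (simp add: clamp)
  moreover have "P' (max a (min b u)) = (if u \<le> a then 0 else if u \<le> b then P' u else 0)"
    using assms by (simp add: clamp)
  ultimately show ?thesis
    by simp
qed

definition smoothstep :: "real \<Rightarrow> real" where
  "smoothstep u = (let v = max 0 (min 1 u) in 3 * v\<^sup>2 - 2 * v ^ 3)"

definition smoothstep' :: "real \<Rightarrow> real" where
  "smoothstep' u = (let v = max 0 (min 1 u) in 6 * v * (1 - v))"

lemma smoothstep_has_real_derivative: "(smoothstep has_real_derivative smoothstep' u) (at u)"
proof -
  have "((\<lambda>v. 3 * v\<^sup>2 - 2 * v ^ 3) has_real_derivative 6 * v * (1 - v)) (at v)" for v :: real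
    by (auto intro!: derivative_eq_intros simp: algebra_simps power2_eq_square)
  from has_real_derivative_compose_clamp[of 0 1, OF _ this] show ?thesis
    unfolding smoothstep_def[abs_def] smoothstep'_def Let_def by simp
qed

lemma smoothstep_eq_0: "u \<le> 0 \<Longrightarrow> smoothstep u = 0"
  and smoothstep_eq_1: "1 \<le> u \<Longrightarrow> smoothstep u = 1"
  by (auto simp: smoothstep_def)

lemma continuous_on_smoothstep: "continuous_on A smoothstep"
  using smoothstep_has_real_derivative
  by (meson DERIV_isCont continuous_at_imp_continuous_on)

lemma smoothstep'_nonneg: "0 \<le> smoothstep' u"
  by (auto simp: smoothstep'_def Let_def intro!: mult_nonneg_nonneg)

lemma mono_smoothstep: "mono smoothstep"
proof (rule monoI)
  fix u v :: real
  assume "u \<le> v"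
  then show "smoothstep u \<le> smoothstep v"
    by (rule DERIV_nonneg_imp_nondecreasing)
      (use smoothstep_has_real_derivative smoothstep'_nonneg in blast)
qed

lemma smoothstep_bounds: "0 \<le> smoothstep u" "smoothstep u \<le> 1"
  using monoD[OF mono_smoothstep, of 0 u] monoD[OF mono_smoothstep, of u 1]
  by (cases "0 \<le> u"; cases "u \<le> 1"; simp add: smoothstep_eq_0 smoothstep_eq_1)+

lemma lipschitz_smoothstep': "6-lipschitz_on UNIV smoothstep'"
proof -
  have poly: "6-lipschitz_on {0..1} (\<lambda>v::real. 6 * v * (1 - v))"
  proof (rule lipschitz_onI)
    fix x y :: real assume "x \<in> {0..1}" "y \<in> {0..1}"
    then have "\<bar>1 - x - y\<bar> \<le> 1" by auto
    then have "\<bar>x - y\<bar> * \<bar>1 - x - y\<bar> \<le> \<bar>x - y\<bar>"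
      by (simp add: mult_left_le)
    moreover have "6 * x * (1 - x) - 6 * y * (1 - y) = 6 * ((x - y) * (1 - x - y))"
      by (simp add: algebra_simps)
    ultimately show "dist (6 * x * (1 - x)) (6 * y * (1 - y)) \<le> 6 * dist x y"
      by (simp add: dist_real_def abs_mult)
  qed simp
  have clamp: "1-lipschitz_on UNIV (\<lambda>u::real. max 0 (min 1 u))"
    by (rule lipschitz_onI) (auto simp: dist_real_def)
  have "range (\<lambda>u::real. max 0 (min 1 u)) \<subseteq> {0..1}" by auto
  from lipschitz_on_compose2[OF clamp lipschitz_on_subset[OF poly this]] show ?thesis
    by (simp add: smoothstep'_def[abs_def] Let_def)
qed

lemma frac_eq_shift_of_int:
  "of_int k \<le> y \<Longrightarrow> y < of_int k + 1 \<Longrightarrow> frac y = y - of_int k"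
  by (simp add: frac_def floor_unique)

lemma comp_frac_eq_shift:
  fixes \<phi> :: "real \<Rightarrow> real"
  assumes lo: "\<And>t. t \<le> a \<Longrightarrow> \<phi> t = c" and hi: "\<And>t. b \<le> t \<Longrightarrow> \<phi> t = c"
    and "0 \<le> a" "a \<le> b" "b \<le> 1" and "b - 1 < y - of_int k" "y - of_int k < 1 + a"
  shows "\<phi> (frac y) = \<phi> (y - of_int k)"
proof -
  consider "y < of_int k" | "of_int k \<le> y" "y < of_int k + 1" | "of_int k + 1 \<le> y"
    by linarith
  then show ?thesis
  proof cases
    case 1
    then have "frac y = y - of_int (k - 1)"
      using assms(3-6) by (intro frac_eq_shift_of_int) auto
    then show ?thesis
      using 1 assms by (simp add: lo hi)
  next
    case 2
    then show ?thesis by (simp add: frac_eq_shift_of_int)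
  next
    case 3
    then have "frac y = y - of_int (k + 1)"
      using assms(3-7) by (intro frac_eq_shift_of_int) auto
    then show ?thesis
      using 3 assms by (simp add: lo hi)
  qed
qed

lemma has_real_derivative_compose_frac:
  fixes \<phi> \<phi>' :: "real \<Rightarrow> real"
  assumes der: "\<And>y. (\<phi> has_real_derivative \<phi>' y) (at y)"
    and lo: "\<And>t. t \<le> a \<Longrightarrow> \<phi> t = c" and hi: "\<And>t. b \<le> t \<Longrightarrow> \<phi> t = c"
    and "0 < a" "a \<le> b" "b < 1"
  shows "((\<lambda>x. \<phi> (frac x)) has_real_derivative \<phi>' (frac x)) (at x)"
proof -
  define k where "k = \<lfloor>x\<rfloor>"
  have "((\<lambda>y. y - of_int k) has_real_derivative 1) (at x)"
    by (auto intro!: derivative_eq_intros)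
  from DERIV_chain2[OF der this]
  have "((\<lambda>y. \<phi> (y - of_int k)) has_real_derivative \<phi>' (frac x)) (at x)"
    by (simp add: frac_def k_def)
  moreover have "\<phi> (frac y) = \<phi> (y - of_int k)" if "y \<in> ball x (min a (1 - b))" for y
  proof (rule comp_frac_eq_shift[OF lo hi])
    have "of_int k \<le> x" "x < of_int k + 1" "\<bar>y - x\<bar> < min a (1 - b)"
      using that unfolding k_def by (auto simp: dist_real_def)
    then show "b - 1 < y - of_int k" "y - of_int k < 1 + a"
      by auto
  qed (use assms in auto)
  ultimately show ?thesis
    using assms by (auto intro: has_field_derivative_transform_within_open[where S="ball x (min a (1 - b))"])
qed

lemma lipschitz_on_compose_frac:
  fixes \<psi> :: "real \<Rightarrow> real"
  assumes lip: "K-lipschitz_on {0..1} \<psi>" and "\<psi> 0 = \<psi> 1"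
  shows "K-lipschitz_on UNIV (\<lambda>x. \<psi> (frac x))"
proof (rule lipschitz_on_leI)
  show "0 \<le> K" using lipschitz_on_nonneg[OF lip] .
  fix x y :: real
  assume "x \<le> y"
  have frac_in: "frac z \<in> {0..1}" for z :: real
    using frac_lt_1[of z] by auto
  show "dist (\<psi> (frac x)) (\<psi> (frac y)) \<le> K * dist x y"
  proof (cases "\<lfloor>x\<rfloor> = \<lfloor>y\<rfloor>")
    case True
    then have "dist (frac x) (frac y) = dist x y"
      by (simp add: frac_def dist_real_def)
    then show ?thesis
      using lipschitz_onD[OF lip frac_in frac_in, of x y] by simp
  next
    case False
    \<comment> \<open>an integer lies between \<open>x\<close> and \<open>y\<close>; cross it via \<open>\<psi> 1 = \<psi> 0\<close>\<close>
    with \<open>x \<le> y\<close> have "\<lfloor>x\<rfloor> + 1 \<le> \<lfloor>y\<rfloor>"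
      by (metis floor_mono order.not_eq_order_implies_strict zless_imp_add1_zle)
    then have gap: "(1 - frac x) + frac y \<le> y - x"
      unfolding frac_def by linarith
    have "dist (\<psi> (frac x)) (\<psi> (frac y)) \<le> dist (\<psi> (frac x)) (\<psi> 1) + dist (\<psi> 0) (\<psi> (frac y))"
      using dist_triangle[of "\<psi> (frac x)" "\<psi> (frac y)" "\<psi> 1"] assms(2) by (simp add: dist_commute)
    also have "\<dots> \<le> K * dist (frac x) 1 + K * dist 0 (frac y)"
      using lipschitz_onD[OF lip frac_in, of 1 x] lipschitz_onD[OF lip _ frac_in, of 0 y]
      by (intro add_mono) auto
    also have "\<dots> = K * ((1 - frac x) + frac y)"
      using frac_lt_1[of x] by (simp add: dist_real_def algebra_simps)
    also have "\<dots> \<le> K * dist x y"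
      using gap \<open>x \<le> y\<close> \<open>0 \<le> K\<close> by (simp add: dist_real_def mult_left_mono)
    finally show ?thesis .
  qed
qed

lemma C11_real_compose_frac:
  fixes \<phi> \<phi>' :: "real \<Rightarrow> real"
  assumes der: "\<And>y. (\<phi> has_real_derivative \<phi>' y) (at y)"
    and lip: "K-lipschitz_on UNIV \<phi>'"
    and lo: "\<And>t. t \<le> a \<Longrightarrow> \<phi> t = c" and hi: "\<And>t. b \<le> t \<Longrightarrow> \<phi> t = c"
    and "0 < a" "a \<le> b" "b < 1"
  shows "C11_real (\<lambda>x. \<phi> (frac x))"
proof -
  have frac_der: "((\<lambda>x. \<phi> (frac x)) has_real_derivative \<phi>' (frac x)) (at x)" for x
    using has_real_derivative_compose_frac[OF der lo hi] assms by blast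
  have "\<phi> 0 = \<phi> y" if "\<bar>0 - y\<bar> < a" for y
    using that assms by (simp add: lo)
  then have \<phi>'_0: "\<phi>' 0 = 0"
    using DERIV_local_const[OF der] \<open>0 < a\<close> by blast
  have "\<phi> 1 = \<phi> y" if "\<bar>1 - y\<bar> < 1 - b" for y
    using that assms by (simp add: hi)
  then have \<phi>'_1: "\<phi>' 1 = 0"
    using DERIV_local_const[OF der] \<open>b < 1\<close> by (metis diff_gt_0_iff_gt)
  have "K-lipschitz_on UNIV (\<lambda>x. \<phi>' (frac x))"
    using \<phi>'_0 \<phi>'_1 by (intro lipschitz_on_compose_frac lipschitz_on_subset[OF lip]) auto
  moreover have "deriv (\<lambda>x. \<phi> (frac x)) = (\<lambda>x. \<phi>' (frac x))"
    using frac_der DERIV_imp_deriv by blast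
  ultimately show ?thesis
    unfolding C11_real_def using frac_der real_differentiable_def by auto
qed

definition plateau :: "real \<Rightarrow> real \<Rightarrow> real \<Rightarrow> real \<Rightarrow> real \<Rightarrow> real \<Rightarrow> real" where
  "plateau p q a b w y = p + (q - p) * (smoothstep ((y - a) / w) - smoothstep ((y - b) / w))"

definition plateau' :: "real \<Rightarrow> real \<Rightarrow> real \<Rightarrow> real \<Rightarrow> real \<Rightarrow> real \<Rightarrow> real" where
  "plateau' p q a b w y = (q - p) / w * (smoothstep' ((y - a) / w) - smoothstep' ((y - b) / w))"

lemma plateau_eq_rise:
  "0 < w \<Longrightarrow> y \<le> b \<Longrightarrow> plateau p q a b w y = p + (q - p) * smoothstep ((y - a) / w)"
  by (simp add: plateau_def smoothstep_eq_0 divide_le_0_iff)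

lemma plateau_eq_fall:
  "0 < w \<Longrightarrow> a + w \<le> y \<Longrightarrow> plateau p q a b w y = q - (q - p) * smoothstep ((y - b) / w)"
  by (simp add: plateau_def smoothstep_eq_1 algebra_simps)

lemma plateau_eq_left: "0 < w \<Longrightarrow> a \<le> b \<Longrightarrow> y \<le> a \<Longrightarrow> plateau p q a b w y = p"
  by (simp add: plateau_eq_rise smoothstep_eq_0 divide_le_0_iff)

lemma plateau_eq_top: "0 < w \<Longrightarrow> a + w \<le> y \<Longrightarrow> y \<le> b \<Longrightarrow> plateau p q a b w y = q"
  by (simp add: plateau_eq_rise smoothstep_eq_1)

lemma plateau_eq_right: "0 < w \<Longrightarrow> a \<le> b \<Longrightarrow> b + w \<le> y \<Longrightarrow> plateau p q a b w y = p"
  by (simp add: plateau_eq_fall smoothstep_eq_1)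

lemma plateau_bounds:
  assumes "0 < w" "a \<le> b" "p \<le> q"
  shows "p \<le> plateau p q a b w y" "plateau p q a b w y \<le> q"
proof -
  define t where "t = smoothstep ((y - a) / w) - smoothstep ((y - b) / w)"
  have "smoothstep ((y - b) / w) \<le> smoothstep ((y - a) / w)"
    using assms by (intro monoD[OF mono_smoothstep] divide_right_mono) auto
  then have "0 \<le> t" "t \<le> 1"
    using smoothstep_bounds[of "(y - a) / w"] smoothstep_bounds[of "(y - b) / w"] by (auto simp: t_def)
  then have "0 \<le> (q - p) * t" "(q - p) * t \<le> q - p"
    using \<open>p \<le> q\<close> by (auto intro: mult_left_le)
  then show "p \<le> plateau p q a b w y" "plateau p q a b w y \<le> q"
    by (auto simp: plateau_def t_def)
qed

lemma plateau_has_real_derivative: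
  "w \<noteq> 0 \<Longrightarrow> (plateau p q a b w has_real_derivative plateau' p q a b w y) (at y)"
  unfolding plateau_def[abs_def] plateau'_def
  by (auto intro!: derivative_eq_intros DERIV_chain2[OF smoothstep_has_real_derivative]
      simp: field_simps)

lemma lipschitz_plateau':
  assumes "0 < w"
  shows "(\<bar>(q - p) / w\<bar> * (6 / w + 6 / w))-lipschitz_on UNIV (plateau' p q a b w)"
proof -
  have shifted: "(6 * (1 / w))-lipschitz_on UNIV (\<lambda>y. smoothstep' ((y - c) / w))" for c
  proof (rule lipschitz_on_compose2[where g = smoothstep' and f = "\<lambda>y. (y - c) / w"])
    show "(1 / w)-lipschitz_on UNIV (\<lambda>y. (y - c) / w)"
      using assms by (intro lipschitz_onI) (auto simp: dist_real_def field_simps)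
  qed (rule lipschitz_on_subset[OF lipschitz_smoothstep'], simp)
  show ?thesis
    unfolding plateau'_def[abs_def]
    by (intro lipschitz_on_cmult_real lipschitz_on_diff shifted[simplified])
qed

lemma has_integral_rescale:
  fixes F :: "real \<Rightarrow> real"
  assumes "F integrable_on {0..1}" "0 < w"
  shows "((\<lambda>x. F ((x - s) / w)) has_integral (w * integral {0..1} F)) {s..s + w}"
proof -
  have "(F has_integral integral {0..1} F) (cbox 0 1)"
    using assms(1) by (simp add: has_integral_integral)
  from has_integral_affinity'[OF this, of "1 / w" "- s / w"] assms(2)
  have "((\<lambda>x. F ((x - s) / w)) has_integral w * integral {0..1} F) {s..(s * w + w * w) / w}"
    by (simp add: field_simps)
  moreover have "(s * w + w * w) / w = s + w"
    using assms(2) by (simp add: field_simps)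
  ultimately show ?thesis
    by simp
qed

lemma has_integral_const_on:
  fixes f :: "real \<Rightarrow> real"
  assumes "s \<le> t" "\<And>x. x \<in> {s..t} \<Longrightarrow> f x = c"
  shows "(f has_integral (t - s) * c) {s..t}"
  using has_integral_const_real[of c s t] assms by (auto intro: has_integral_eq)

lemma integral_comp_frac: "integral {0..1} (\<lambda>x. h (frac x)) = integral {0..1} h"
  by (rule integral_spike[where S="{1}"]) (auto simp: frac_eq)

lemma has_integral_plateau:
  fixes g :: "real \<Rightarrow> real"
  assumes g: "continuous_on {p..q} g" and "p \<le> q" "0 < w" "0 \<le> a" "a + w \<le> b" "b + w \<le> 1"
  defines "J_rise \<equiv> integral {0..1} (\<lambda>u. g (p + (q - p) * smoothstep u))"
    and "J_fall \<equiv> integral {0..1} (\<lambda>u. g (q - (q - p) * smoothstep u))"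
  shows "((\<lambda>y. g (plateau p q a b w y)) has_integral
           (1 - (b - a) - w) * g p + (b - a - w) * g q + w * (J_rise + J_fall)) {0..1}"
proof -
  let ?f = "\<lambda>y. g (plateau p q a b w y)"
  have in_range: "p + (q - p) * t \<in> {p..q}" "q - (q - p) * t \<in> {p..q}"
    if "0 \<le> t" "t \<le> 1" for t
    using that \<open>p \<le> q\<close> mult_left_le[of t "q - p"] by auto
  have "(\<lambda>u. g (p + (q - p) * smoothstep u)) integrable_on {0..1}"
    "(\<lambda>u. g (q - (q - p) * smoothstep u)) integrable_on {0..1}"
    by (intro integrable_continuous_real continuous_on_compose2[OF g] continuous_intros
        continuous_on_smoothstep; use in_range smoothstep_bounds in blast)+
  note rescaled = this[THEN has_integral_rescale, OF \<open>0 < w\<close>]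
  have left: "(?f has_integral (a - 0) * g p) {0..a}"
    by (rule has_integral_const_on) (use assms in \<open>auto simp: plateau_eq_left\<close>)
  have rise: "(?f has_integral w * J_rise) {a..a + w}"
    unfolding J_rise_def
    by (rule has_integral_eq[OF _ rescaled(1)]) (use assms in \<open>auto simp: plateau_eq_rise\<close>)
  have top: "(?f has_integral (b - (a + w)) * g q) {a + w..b}"
    by (rule has_integral_const_on) (use assms in \<open>auto simp: plateau_eq_top\<close>)
  have fall: "(?f has_integral w * J_fall) {b..b + w}"
    unfolding J_fall_def
    by (rule has_integral_eq[OF _ rescaled(2)]) (use assms in \<open>auto simp: plateau_eq_fall\<close>)
  have right: "(?f has_integral (1 - (b + w)) * g p) {b + w..1}"
    by (rule has_integral_const_on) (use assms in \<open>auto simp: plateau_eq_right\<close>)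
  have "(?f has_integral (a - 0) * g p + w * J_rise) {0..a + w}"
    using has_integral_combine[OF _ _ left rise] assms by simp
  then have "(?f has_integral (a - 0) * g p + w * J_rise + (b - (a + w)) * g q) {0..b}"
    using has_integral_combine[OF _ _ _ top] assms by simp
  then have "(?f has_integral (a - 0) * g p + w * J_rise + (b - (a + w)) * g q + w * J_fall) {0..b + w}"
    using has_integral_combine[OF _ _ _ fall] assms by simp
  then have "(?f has_integral (a - 0) * g p + w * J_rise + (b - (a + w)) * g q + w * J_fall
      + (1 - (b + w)) * g p) {0..1}"
    using has_integral_combine[OF _ _ _ right] assms by simp
  then show ?thesis
    by (rule has_integral_eq_rhs) (simp add: algebra_simps)
qed

lemma plateau_frac_in_classC:
  assumes "p1 \<le> p2" "0 < w" "0 < \<alpha>" "\<alpha> + w \<le> \<beta>" "\<beta> + w < 1"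
    and "L - l \<le> \<alpha>" "\<alpha> + w \<le> L" "1 - l \<le> \<beta>"
  shows "(\<lambda>x. plateau p1 p2 \<alpha> \<beta> w (frac x)) \<in> classC p1 p2 L l"
  unfolding classC_def
proof (intro CollectI conjI allI ballI)
  fix x
  show "plateau p1 p2 \<alpha> \<beta> w (frac (x + 1)) = plateau p1 p2 \<alpha> \<beta> w (frac x)"
    by (simp add: frac_1_eq)
  show "p1 \<le> plateau p1 p2 \<alpha> \<beta> w (frac x)" "plateau p1 p2 \<alpha> \<beta> w (frac x) \<le> p2"
    using plateau_bounds assms by auto
next
  show "C11_real (\<lambda>x. plateau p1 p2 \<alpha> \<beta> w (frac x))"
  proof (rule C11_real_compose_frac)
    show "(plateau p1 p2 \<alpha> \<beta> w has_real_derivative plateau' p1 p2 \<alpha> \<beta> w y) (at y)" for y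
      using assms by (simp add: plateau_has_real_derivative)
    show "plateau p1 p2 \<alpha> \<beta> w t = p1" if "t \<le> \<alpha>" for t
      using that assms by (simp add: plateau_eq_left)
    show "plateau p1 p2 \<alpha> \<beta> w t = p1" if "\<beta> + w \<le> t" for t
      using that assms by (simp add: plateau_eq_right)
  qed (use assms lipschitz_plateau' in auto)
next
  fix x
  assume "x \<in> {0..L - l}"
  with assms show "plateau p1 p2 \<alpha> \<beta> w (frac x) = p1"
    by (simp add: frac_eq plateau_eq_left)
next
  fix x
  assume "x \<in> {L..1 - l}"
  with assms show "plateau p1 p2 \<alpha> \<beta> w (frac x) = p2"
    by (simp add: frac_eq plateau_eq_top)
qed

lemma plateau_parameters:
  fixes L l D E :: real
  assumes "0 < l" "l < L" "l < 1 - L" "0 < D"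
  obtains w \<alpha> \<beta> where "0 < w" "0 < \<alpha>" "\<alpha> + w \<le> \<beta>" "\<beta> + w < 1"
    "L - l \<le> \<alpha>" "\<alpha> + w \<le> L" "1 - l \<le> \<beta>" "(\<beta> - \<alpha>) * D + w * E = (1 - L) * D"
proof -
  define w where "w = l * D / (2 * (\<bar>E\<bar> + D))"
  have "0 < w"
    using assms by (simp add: w_def)
  have "w * (2 * (\<bar>E\<bar> + D)) = l * D"
    using assms by (simp add: w_def)
  then have w_eq: "2 * w * \<bar>E\<bar> + 2 * w * D = l * D"
    by (simp add: algebra_simps)
  have "0 \<le> 2 * w * \<bar>E\<bar>"
    using \<open>0 < w\<close> by simp
  then have "2 * w * D \<le> l * D"
    using w_eq by linarith
  then have "w \<le> l / 2"
    using \<open>0 < D\<close> by simp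
  define s where "s = w * E / D"
  have "(l / 2 - w / 2) * D = w * \<bar>E\<bar> + w * D / 2"
    using w_eq by (simp add: field_simps)
  then have "w * \<bar>E\<bar> \<le> (l / 2 - w / 2) * D"
    using \<open>0 < w\<close> \<open>0 < D\<close> by simp
  then have "\<bar>s\<bar> \<le> l / 2 - w / 2"
    using \<open>0 < w\<close> \<open>0 < D\<close> by (simp add: s_def abs_mult pos_divide_le_eq)
  then have shift: "s \<le> l / 2 - w / 2" "- s \<le> l / 2 - w / 2"
    by auto
  define \<beta> where "\<beta> = 1 - l / 2 - w / 2"
  define \<alpha> where "\<alpha> = L - l / 2 - w / 2 + s"
  show thesis
  proof (rule that[of w \<alpha> \<beta>])
    show "(\<beta> - \<alpha>) * D + w * E = (1 - L) * D"
      using \<open>0 < D\<close> by (simp add: \<alpha>_def \<beta>_def s_def field_simps)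
  qed (use \<open>0 < w\<close> \<open>w \<le> l / 2\<close> shift assms in \<open>unfold \<alpha>_def \<beta>_def, linarith+\<close>)
qed

theorem lemma5p1:
  fixes G :: "real \<Rightarrow> real" and p1 p2 L l :: real
  assumes "C2_real G" and "coercive G" and "p1 < p2"
    and "deriv G p1 < 0" and "0 < deriv G p2"
    and "L = deriv G p2 / (deriv G p2 - deriv G p1)"
    and "0 < l" and "l < min L (1 - L)"
  shows "\<exists>f \<in> classC p1 p2 L l. integral {0..1} (\<lambda>x. deriv G (f x)) = 0"
proof -
  have "continuous_on {p1..p2} (deriv G)"
    using assms(1) unfolding C2_real_def
    by (meson continuous_at_imp_continuous_on differentiable_imp_continuous_within)
  define D where "D = deriv G p2 - deriv G p1"
  define J where "J = integral {0..1} (\<lambda>u. deriv G (p1 + (p2 - p1) * smoothstep u))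
    + integral {0..1} (\<lambda>u. deriv G (p2 - (p2 - p1) * smoothstep u))"
  have "0 < D" "L * D = deriv G p2"
    using assms(4-6) by (simp_all add: D_def)
  with assms(7,8) obtain w \<alpha> \<beta> where params: "0 < w" "0 < \<alpha>" "\<alpha> + w \<le> \<beta>" "\<beta> + w < 1"
    "L - l \<le> \<alpha>" "\<alpha> + w \<le> L" "1 - l \<le> \<beta>"
    and balance: "(\<beta> - \<alpha>) * D + w * (J - deriv G p1 - deriv G p2) = (1 - L) * D"
    using plateau_parameters[of l L D "J - deriv G p1 - deriv G p2"] by auto
  define f where "f x = plateau p1 p2 \<alpha> \<beta> w (frac x)" for x
  have "f \<in> classC p1 p2 L l"
    unfolding f_def using params assms(3) by (intro plateau_frac_in_classC) auto
  have "integral {0..1} (\<lambda>x. deriv G (f x))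
      = (1 - (\<beta> - \<alpha>) - w) * deriv G p1 + (\<beta> - \<alpha> - w) * deriv G p2 + w * J"
    unfolding f_def integral_comp_frac[of "\<lambda>y. deriv G (plateau p1 p2 \<alpha> \<beta> w y)"] J_def
    using params assms(3) \<open>continuous_on {p1..p2} (deriv G)\<close>
    by (intro integral_unique has_integral_plateau) auto
  also have "\<dots> = deriv G p1 + (1 - L) * D"
    using balance by (simp add: D_def algebra_simps)
  also have "\<dots> = 0"
    using \<open>L * D = deriv G p2\<close> by (simp add: D_def algebra_simps)
  finally show ?thesis
    using \<open>f \<in> classC p1 p2 L l\<close> by blast
qed

end
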